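(* Let $K\ge1$, $r>0$ and $\mathcal S\subset[0,r]^K$. Let $U$ be the uniform probability measure on $\mathbb S^{K-1}_+=\{v\in\mathbb R^K:\|v\|_2=1,\ v_i\ge0\ \forall i\}$, and $c_K=\pi^{K/2}/(2^K\Gamma(K/2+1))$. Then $$\mathrm{HV}_r(\mathcal S)=c_K\,\mathbb E_{u\sim U}\Big[\sup_{s\in\mathcal S}\min_{k\in[K]}\Big(\frac{r-s_k}{u_k}\Big)^K\Big].$$
   Context: $\mathrm{HV}_r(\mathcal S)=\mathrm{vol}(\{x\in[0,r]^K:\exists s\in\mathcal S,\ s\preceq x\})$, where $\mathrm{vol}$ is Lebesgue measure and $s\preceq x$ means $s_i\le x_i$ for all $i$. The uniform measure is $U(A)=c_K^{-1}\mathrm{vol}(\{tv:t\in[0,1],v\in A\})$ for Borel $A\subset\mathbb S^{K-1}_+$. Convention: $(r-s_k)/u_k=+\infty$ when $u_k=0$ (a $U$-null event). $\Gamma$ is the gamma function. *)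

theory Defs
  imports "HOL-Analysis.Analysis"
begin

text \<open>Dimension K is CARD('n); vectors in R^K are of type real^'n (Euclidean norm).\<close>

definition cK :: "'n::finite itself \<Rightarrow> real" where
  "cK _ = pi powr (real CARD('n) / 2) / (2 ^ CARD('n) * Gamma (real CARD('n) / 2 + 1))"

definition HV :: "real \<Rightarrow> (real^'n::finite) set \<Rightarrow> ennreal" where
  "HV r S = emeasure lebesgue
     {x :: real^'n. (\<forall>i. 0 \<le> x$i \<and> x$i \<le> r) \<and> (\<exists>s\<in>S. \<forall>i. s$i \<le> x$i)}"

definition sphere_pos :: "(real^'n::finite) set" where
  "sphere_pos = {v. norm v = 1 \<and> (\<forall>i. 0 \<le> v$i)}"

definition cone01 :: "(real^'n::finite) set \<Rightarrow> (real^'n) set" where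
  "cone01 A = {t *\<^sub>R v | t v. t \<in> {0..1} \<and> v \<in> A}"

text \<open>Uniform measure on the positive orthant of the unit sphere:
  U(A) = c_K^{-1} vol(cone01 A) on Borel subsets of sphere_pos.\<close>
definition U_sph :: "(real^'n::finite) measure" where
  "U_sph = measure_of sphere_pos (sets (restrict_space borel sphere_pos))
     (\<lambda>A. ennreal (1 / cK TYPE('n)) * emeasure lebesgue (cone01 A))"

definition ratio :: "real \<Rightarrow> real \<Rightarrow> real \<Rightarrow> ennreal" where
  "ratio r sk uk = (if uk = 0 then \<infinity> else ennreal ((r - sk) / uk))"

end

theory Submission
  imports Defs
begin

text \<open>
  Reflecting through \<open>x \<mapsto> r\<one> - x\<close> turns the dominated region into a set that is star-shaped
  about the origin inside the positive orthant: \<open>y = t u\<close> (\<open>u\<close> a unit vector) lies in it iff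
  \<open>r\<one> - t u \<ge> s\<close> for some \<open>s \<in> S\<close>, i.e. iff \<open>t \<le> min\<^sub>k (r - s\<^sub>k) / u\<^sub>k\<close>. By the very
  definition of \<open>U\<close>, a star-shaped set whose radial function is \<open>\<rho>\<close> has volume
  \<open>c\<^sub>K \<integral> \<rho>\<^sup>K dU\<close>: for cones this is the scaling of Lebesgue measure, for simple \<open>\<rho>\<^sup>K\<close> it follows by
  additivity and in general by monotone convergence. Since the supremum over \<open>S\<close> need not be
  attained, the reflected region is only squeezed between the sets cut out by the strict and the
  non-strict inequality \<open>t\<^sup>K < \<rho>(u)\<^sup>K\<close> resp. \<open>t\<^sup>K \<le> \<rho>(u)\<^sup>K\<close>; these have the same volume.
\<close>

section \<open>Sectors and the uniform measure on the positive sphere\<close>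

definition sector :: "real \<Rightarrow> (real^'n::finite) set \<Rightarrow> (real^'n) set" where
  "sector R A = {y. y \<noteq> 0 \<and> sgn y \<in> A \<and> norm y < R}"

lemma sector_borel:
  assumes "A \<in> sets borel"
  shows "sector R A \<in> sets borel"
proof -
  have "sector R A = {y. y \<noteq> 0} \<inter> sgn -` A \<inter> {y. norm y < R}"
    by (auto simp: sector_def)
  moreover have "sgn -` A \<in> sets borel"
    using measurable_sets[OF borel_measurable_sgn assms] by simp
  ultimately show ?thesis by auto
qed

lemma sector_scaleR:
  assumes "R > 0"
  shows "sector R A = (\<lambda>x. R *\<^sub>R x + 0) ` sector 1 A"
proof
  show "sector R A \<subseteq> (\<lambda>x. R *\<^sub>R x + 0) ` sector 1 A"
  proof
    fix y assume y: "y \<in> sector R A"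
    have "y = R *\<^sub>R (y /\<^sub>R R) + 0" using assms by simp
    moreover have "y /\<^sub>R R \<in> sector 1 A"
      using y assms by (simp add: sector_def sgn_scaleR field_simps)
    ultimately show "y \<in> (\<lambda>x. R *\<^sub>R x + 0) ` sector 1 A" by blast
  qed
  show "(\<lambda>x. R *\<^sub>R x + 0) ` sector 1 A \<subseteq> sector R A"
    using assms by (auto simp: sector_def sgn_scaleR)
qed

lemma emeasure_sector:
  assumes "0 \<le> R"
  shows "emeasure lebesgue (sector R (A::(real^'n::finite) set))
    = ennreal (R ^ CARD('n)) * emeasure lebesgue (sector 1 A)"
proof (cases "R = 0")
  case True
  then have "sector R A = {}" by (auto simp: sector_def)
  with True show ?thesis by simp
next
  case False
  with assms have "R > 0" by simp
  then show ?thesis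
    using emeasure_lebesgue_affine[of R 0 "sector 1 A"]
    by (simp only: sector_scaleR[OF \<open>R > 0\<close>]) (simp add: ennreal_power)
qed

lemma emeasure_cone01:
  assumes "A \<subseteq> (sphere_pos :: (real^'n::finite) set)" "A \<in> sets borel"
  shows "emeasure lebesgue (cone01 A) = emeasure lebesgue (sector 1 A)"
proof -
  have "sector 1 A \<subseteq> cone01 A"
  proof
    fix y assume "y \<in> sector 1 A"
    moreover have "y = norm y *\<^sub>R sgn y" by (cases "y = 0") (simp_all add: sgn_div_norm)
    ultimately show "y \<in> cone01 A" unfolding sector_def cone01_def by force
  qed
  moreover have "cone01 A \<subseteq> sector 1 A \<union> ({0} \<union> sphere 0 1)"
  proof
    fix y assume "y \<in> cone01 A"
    then obtain t v where "y = t *\<^sub>R v" "t \<in> {0..1}" "v \<in> A"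
      by (auto simp: cone01_def)
    moreover have "norm v = 1" using \<open>v \<in> A\<close> assms(1) by (auto simp: sphere_pos_def)
    ultimately show "y \<in> sector 1 A \<union> ({0} \<union> sphere 0 1)"
      by (auto simp: sector_def sgn_scaleR sgn_div_norm)
  qed
  ultimately have "cone01 A = sector 1 A \<union> (cone01 A \<inter> ({0} \<union> sphere 0 1))"
    by blast
  moreover have "cone01 A \<inter> ({0} \<union> sphere 0 1) \<in> null_sets lebesgue"
    using negligible_sphere negligible_sing
    by (metis negligible_Un negligible_iff_null_sets negligible_subset inf_le2)
  moreover have "sector 1 A \<in> sets lebesgue" using sector_borel[OF assms(2)] by simp
  ultimately show ?thesis by (metis emeasure_Un_null_set)
qed

lemma sphere_pos_borel: "(sphere_pos :: (real^'n::finite) set) \<in> sets borel"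
proof -
  have "sphere_pos = {v::real^'n. norm v = 1} \<inter> (\<Inter>i. {v. 0 \<le> v$i})"
    by (auto simp: sphere_pos_def)
  moreover have "closed {v::real^'n. norm v = 1}"
    by (rule closed_Collect_eq) (auto intro: continuous_intros)
  moreover have "closed (\<Inter>i. {v::real^'n. 0 \<le> v$i})"
    by (intro closed_INT ballI closed_halfspace_component_ge_cart)
  ultimately show ?thesis by (metis borel_closed closed_Int)
qed

lemma sgn_in_sphere_pos_iff:
  "y \<noteq> 0 \<Longrightarrow> sgn y \<in> sphere_pos \<longleftrightarrow> (\<forall>i. 0 \<le> (y::real^'n::finite)$i)"
  by (auto simp: sphere_pos_def norm_sgn sgn_div_norm zero_le_mult_iff)

lemma sigma_algebra_sphere_pos:
  "sigma_algebra (sphere_pos::(real^'n::finite) set) (sets (restrict_space borel sphere_pos))"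
  using sets.sigma_algebra_axioms[of "restrict_space borel (sphere_pos::(real^'n) set)"]
  by (simp add: space_restrict_space)

lemma space_U_sph: "space (U_sph::(real^'n::finite) measure) = sphere_pos"
  unfolding U_sph_def by (rule sigma_algebra.space_measure_of_eq[OF sigma_algebra_sphere_pos])

lemma sets_U_sph: "sets (U_sph::(real^'n::finite) measure) = sets (restrict_space borel sphere_pos)"
  unfolding U_sph_def by (rule sigma_algebra.sets_measure_of_eq[OF sigma_algebra_sphere_pos])

lemma sets_U_sph_iff:
  "A \<in> sets (U_sph::(real^'n::finite) measure) \<longleftrightarrow> A \<subseteq> sphere_pos \<and> A \<in> sets borel"
  unfolding sets_U_sph by (rule sets_restrict_space_iff) (simp add: sphere_pos_borel)

lemma borel_measurable_U_sph:
  assumes "f \<in> borel_measurable borel"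
  shows "f \<in> borel_measurable (U_sph::(real^'n::finite) measure)"
  using measurable_restrict_space1[OF assms, of sphere_pos]
  by (simp add: measurable_cong_sets[OF sets_U_sph refl])

lemma cK_pos: "cK TYPE('n::finite) > 0"
  unfolding cK_def by (intro divide_pos_pos mult_pos_pos Gamma_real_pos) auto

lemma emeasure_U_sph:
  assumes "A \<in> sets (U_sph::(real^'n::finite) measure)"
  shows "emeasure U_sph A = ennreal (1 / cK TYPE('n)) * emeasure lebesgue (sector 1 A)"
proof -
  let ?\<mu> = "\<lambda>A::(real^'n) set. ennreal (1 / cK TYPE('n)) * emeasure lebesgue (cone01 A)"
  have pos: "positive (sets (restrict_space borel sphere_pos)) ?\<mu>"
    by (simp add: positive_def cone01_def)
  have ca: "countably_additive (sets (restrict_space borel sphere_pos)) ?\<mu>"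
    unfolding countably_additive_def
  proof safe
    fix F :: "nat \<Rightarrow> (real^'n) set"
    assume F: "range F \<subseteq> sets (restrict_space borel sphere_pos)" "disjoint_family F"
      and UF: "\<Union> (range F) \<in> sets (restrict_space borel sphere_pos)"
    have Fi: "F i \<subseteq> sphere_pos \<and> F i \<in> sets borel" for i
      using F(1) sets_U_sph_iff[of "F i"] sets_U_sph by auto
    have UF': "\<Union> (range F) \<subseteq> sphere_pos \<and> \<Union> (range F) \<in> sets borel"
      using UF sets_U_sph_iff[of "\<Union> (range F)"] sets_U_sph by auto
    have "(\<Sum>i. emeasure lebesgue (sector 1 (F i))) = emeasure lebesgue (\<Union>i. sector 1 (F i))"
    proof (rule suminf_emeasure)
      have "sector 1 (F i) \<in> sets borel" for i using Fi sector_borel by blast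
      then show "range (\<lambda>i. sector 1 (F i)) \<subseteq> sets lebesgue" by auto
      show "disjoint_family (\<lambda>i. sector 1 (F i))"
        using F(2) unfolding disjoint_family_on_def sector_def by auto
    qed
    also have "(\<Union>i. sector 1 (F i)) = sector 1 (\<Union> (range F))"
      by (auto simp: sector_def)
    finally have "(\<Sum>i. emeasure lebesgue (cone01 (F i))) = emeasure lebesgue (cone01 (\<Union> (range F)))"
      using Fi UF' by (simp add: emeasure_cone01)
    then show "(\<Sum>i. ?\<mu> (F i)) = ?\<mu> (\<Union> (range F))"
      by (simp add: ennreal_suminf_cmult)
  qed
  have "emeasure U_sph A = ?\<mu> A"
    unfolding U_sph_def
    by (rule emeasure_measure_of_sigma[OF sigma_algebra_sphere_pos pos ca])
       (use assms sets_U_sph in auto)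
  then show ?thesis using assms sets_U_sph_iff emeasure_cone01 by metis
qed

lemma emeasure_sector_U_sph:
  assumes "A \<in> sets (U_sph::(real^'n::finite) measure)" "0 \<le> R"
  shows "emeasure lebesgue (sector R A)
    = ennreal (cK TYPE('n)) * ennreal (R ^ CARD('n)) * emeasure U_sph A"
proof -
  have "ennreal (cK TYPE('n)) * ennreal (1 / cK TYPE('n)) = 1"
    using cK_pos[where 'n='n] by (simp flip: ennreal_mult)
  then show ?thesis
    using emeasure_sector[OF assms(2)] emeasure_U_sph[OF assms(1)]
    by (metis (no_types, lifting) mult.assoc mult.commute mult_1)
qed

section \<open>Volume of star-shaped sets\<close>

definition star_lt :: "((real^'n::finite) \<Rightarrow> ennreal) \<Rightarrow> (real^'n) set" where
  "star_lt g = {y. (\<forall>i. 0 \<le> y$i) \<and> (y = 0 \<or> ennreal (norm y) ^ CARD('n) < g (sgn y))}"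

definition star_le :: "((real^'n::finite) \<Rightarrow> ennreal) \<Rightarrow> (real^'n) set" where
  "star_le g = {y. (\<forall>i. 0 \<le> y$i) \<and> (y = 0 \<or> ennreal (norm y) ^ CARD('n) \<le> g (sgn y))}"

lemma ennreal_power_less_iff_root:
  assumes "0 \<le> t" "0 \<le> p" "0 < n"
  shows "ennreal t ^ n < ennreal p \<longleftrightarrow> t < root n p"
proof -
  have "ennreal t ^ n < ennreal p \<longleftrightarrow> root n (t ^ n) < root n p"
    using assms by (simp add: ennreal_power ennreal_less_iff)
  then show ?thesis using assms by (simp add: real_root_pos2)
qed

lemma emeasure_star_lt_simple:
  fixes f :: "real^'n::finite \<Rightarrow> ennreal"
  assumes f: "simple_function U_sph f" and fin: "\<And>u. f u < top"
  shows "star_lt f \<in> sets lebesgue"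
    and "emeasure lebesgue (star_lt f) = ennreal (cK TYPE('n)) * (\<integral>\<^sup>+ u. f u \<partial>U_sph)"
proof -
  let ?K = "CARD('n)"
  define V where "V = f ` sphere_pos"
  define A where "A \<rho> = f -` {\<rho>} \<inter> sphere_pos" for \<rho>
  define R where "R \<rho> = root ?K (enn2real \<rho>)" for \<rho>
  have "finite V" using simple_functionD(1)[OF f] by (simp add: V_def space_U_sph)
  have A: "A \<rho> \<in> sets U_sph" for \<rho>
    using simple_functionD(2)[OF f] by (simp add: A_def space_U_sph)
  have sector: "sector (R \<rho>) (A \<rho>) \<in> sets lebesgue" for \<rho>
    using sector_borel[of "A \<rho>" "R \<rho>"] A[of \<rho>] by (simp add: sets_U_sph_iff)
  have less_R: "ennreal t ^ ?K < f u \<longleftrightarrow> t < R (f u)" if "0 \<le> t" for t u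
    using ennreal_power_less_iff_root[OF that, of "enn2real (f u)"] fin[of u]
    by (simp add: R_def less_top)
  have star: "star_lt f = (\<Union>\<rho>\<in>V. sector (R \<rho>) (A \<rho>)) \<union> {0}"
  proof (intro equalityI subsetI)
    fix y assume y: "y \<in> star_lt f"
    show "y \<in> (\<Union>\<rho>\<in>V. sector (R \<rho>) (A \<rho>)) \<union> {0}"
    proof (cases "y = 0")
      case False
      then have "sgn y \<in> sphere_pos" "norm y < R (f (sgn y))"
        using y by (auto simp: star_lt_def sgn_in_sphere_pos_iff less_R)
      then have "y \<in> sector (R (f (sgn y))) (A (f (sgn y)))" "f (sgn y) \<in> V"
        using False by (auto simp: sector_def A_def V_def)
      then show ?thesis by blast
    qed simp
  next
    fix y assume "y \<in> (\<Union>\<rho>\<in>V. sector (R \<rho>) (A \<rho>)) \<union> {0}"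
    then show "y \<in> star_lt f"
      by (auto simp: star_lt_def sector_def A_def sgn_in_sphere_pos_iff less_R)
  qed
  have zero: "{0::real^'n} \<in> null_sets lebesgue"
    using negligible_sing by (simp add: negligible_iff_null_sets)
  show "star_lt f \<in> sets lebesgue"
    unfolding star using \<open>finite V\<close> sector null_setsD2[OF zero] by (intro sets.Un sets.finite_UN) auto
  have "emeasure lebesgue (star_lt f) = emeasure lebesgue (\<Union>\<rho>\<in>V. sector (R \<rho>) (A \<rho>))"
    unfolding star using \<open>finite V\<close> sector zero by (intro emeasure_Un_null_set) auto
  also have "\<dots> = (\<Sum>\<rho>\<in>V. emeasure lebesgue (sector (R \<rho>) (A \<rho>)))"
    using \<open>finite V\<close> sector
    by (intro sum_emeasure[symmetric]) (auto simp: disjoint_family_on_def sector_def A_def)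
  also have "\<dots> = (\<Sum>\<rho>\<in>V. ennreal (cK TYPE('n)) * (\<rho> * emeasure U_sph (A \<rho>)))"
  proof (rule sum.cong[OF refl])
    fix \<rho> assume "\<rho> \<in> V"
    then have "\<rho> \<noteq> top" using fin by (auto simp: V_def less_top)
    have "R \<rho> ^ ?K = enn2real \<rho>"
      unfolding R_def by (rule real_root_pow_pos2) simp_all
    then have "ennreal (R \<rho> ^ ?K) = \<rho>" using \<open>\<rho> \<noteq> top\<close> by (simp add: ennreal_enn2real_if)
    moreover have "0 \<le> R \<rho>" by (simp add: R_def)
    ultimately show "emeasure lebesgue (sector (R \<rho>) (A \<rho>))
        = ennreal (cK TYPE('n)) * (\<rho> * emeasure U_sph (A \<rho>))"
      using emeasure_sector_U_sph[OF A] by (simp only: mult.assoc)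
  qed
  also have "\<dots> = ennreal (cK TYPE('n)) * (\<integral>\<^sup>+ u. f u \<partial>U_sph)"
  proof -
    have "(\<integral>\<^sup>+ u. f u \<partial>U_sph) = (\<Sum>\<rho>\<in>V. \<rho> * emeasure U_sph (A \<rho>))"
      by (simp add: nn_integral_eq_simple_integral[OF f] simple_integral_def V_def A_def
          space_U_sph)
    then show ?thesis by (simp add: sum_distrib_left)
  qed
  finally show "emeasure lebesgue (star_lt f) = ennreal (cK TYPE('n)) * (\<integral>\<^sup>+ u. f u \<partial>U_sph)" .
qed

lemma emeasure_star_lt:
  fixes g :: "real^'n::finite \<Rightarrow> ennreal"
  assumes g: "g \<in> borel_measurable U_sph"
  shows "star_lt g \<in> sets lebesgue"
    and "emeasure lebesgue (star_lt g) = ennreal (cK TYPE('n)) * (\<integral>\<^sup>+ u. g u \<partial>U_sph)"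
proof -
  obtain f where f: "\<And>i. simple_function U_sph (f i)" and "incseq f"
    and fin: "\<And>i x. f i x < top" and sup: "\<And>x. (SUP i. f i x) = g x"
    using borel_measurable_implies_simple_function_sequence'[OF g] by blast
  note star_f = emeasure_star_lt_simple[OF f fin]
  have "ennreal (norm y) ^ CARD('n) < g u \<longleftrightarrow> (\<exists>i. ennreal (norm y) ^ CARD('n) < f i u)"
    for y :: "real^'n" and u
    unfolding sup[of u, symmetric] less_SUP_iff by blast
  then have star: "star_lt g = (\<Union>i. star_lt (f i))"
    by (auto simp: star_lt_def)
  then show "star_lt g \<in> sets lebesgue"
    using star_f(1) by auto
  have "incseq (\<lambda>i. star_lt (f i))"
  proof (rule incseq_SucI, rule subsetI)
    fix i y assume "y \<in> star_lt (f i)"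
    moreover have "f i (sgn y) \<le> f (Suc i) (sgn y)"
      using incseqD[OF \<open>incseq f\<close>, of i "Suc i"] by (simp add: le_fun_def)
    ultimately show "y \<in> star_lt (f (Suc i))"
      unfolding star_lt_def by (auto intro: order_less_le_trans)
  qed
  then have "emeasure lebesgue (star_lt g) = (SUP i. emeasure lebesgue (star_lt (f i)))"
    unfolding star using star_f(1) by (intro SUP_emeasure_incseq[symmetric]) auto
  also have "\<dots> = ennreal (cK TYPE('n)) * (SUP i. \<integral>\<^sup>+ u. f i u \<partial>U_sph)"
    by (simp add: star_f(2) SUP_mult_left_ennreal)
  also have "(SUP i. \<integral>\<^sup>+ u. f i u \<partial>U_sph) = (\<integral>\<^sup>+ u. g u \<partial>U_sph)"
    using nn_integral_monotone_convergence_SUP[OF \<open>incseq f\<close> borel_measurable_simple_function[OF f]]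
    by (simp add: sup)
  finally show "emeasure lebesgue (star_lt g) = ennreal (cK TYPE('n)) * (\<integral>\<^sup>+ u. g u \<partial>U_sph)" .
qed

lemma ennreal_le_iff_less_scaled:
  fixes x y :: ennreal
  assumes "0 < x" "x < top"
  shows "x \<le> y \<longleftrightarrow> (\<forall>n. x < ennreal (1 + inverse (real (Suc n))) * y)"
proof
  assume "x \<le> y"
  show "\<forall>n. x < ennreal (1 + inverse (real (Suc n))) * y"
  proof
    fix n
    show "x < ennreal (1 + inverse (real (Suc n))) * y"
    proof (cases y)
      case (real b)
      with assms \<open>x \<le> y\<close> have "0 < b"
        by (metis ennreal_less_zero_iff order_less_le_trans)
      have "b < (1 + inverse (real (Suc n))) * b"
        using \<open>0 < b\<close> by (simp add: algebra_simps)
      then have "y < ennreal ((1 + inverse (real (Suc n))) * b)"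
        unfolding real using \<open>0 < b\<close> by (intro ennreal_lessI) linarith+
      also have "\<dots> = ennreal (1 + inverse (real (Suc n))) * y"
        using real \<open>0 < b\<close> by (simp add: ennreal_mult)
      finally show ?thesis by (rule order_le_less_trans[OF \<open>x \<le> y\<close>])
    qed (use assms in \<open>simp add: ennreal_mult_top\<close>)
  qed
next
  assume less: "\<forall>n. x < ennreal (1 + inverse (real (Suc n))) * y"
  have "(\<lambda>n. ennreal (1 + inverse (real (Suc n))) * y) \<longlonglongrightarrow> ennreal 1 * y"
    by (intro tendsto_mult_ennreal tendsto_ennrealI LIMSEQ_inverse_real_of_nat_add) auto
  then have "(\<lambda>n. ennreal (1 + inverse (real (Suc n))) * y) \<longlonglongrightarrow> y" by simp
  then show "x \<le> y"
    by (rule LIMSEQ_le_const) (use less in \<open>auto intro: less_imp_le\<close>)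
qed

lemma emeasure_star_le:
  fixes g :: "real^'n::finite \<Rightarrow> ennreal"
  assumes g: "g \<in> borel_measurable U_sph"
  shows "star_le g \<in> sets lebesgue"
    and "emeasure lebesgue (star_le g) = ennreal (cK TYPE('n)) * (\<integral>\<^sup>+ u. g u \<partial>U_sph)"
proof -
  define c where "c n = ennreal (1 + inverse (real (Suc n)))" for n
  have star_c: "star_lt (\<lambda>u. c n * g u) \<in> sets lebesgue"
    "emeasure lebesgue (star_lt (\<lambda>u. c n * g u))
       = ennreal (cK TYPE('n)) * (c n * (\<integral>\<^sup>+ u. g u \<partial>U_sph))" for n
    using emeasure_star_lt[of "\<lambda>u. c n * g u"] g by (simp_all add: nn_integral_cmult)
  have star: "star_le g = (\<Inter>n. star_lt (\<lambda>u. c n * g u))"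
  proof -
    have "ennreal (norm y) ^ CARD('n) \<le> g u \<longleftrightarrow> (\<forall>n. ennreal (norm y) ^ CARD('n) < c n * g u)"
      if "y \<noteq> 0" for y :: "real^'n" and u
      using that unfolding c_def by (intro ennreal_le_iff_less_scaled) (auto simp: ennreal_power)
    then show ?thesis by (auto simp: star_le_def star_lt_def)
  qed
  show meas: "star_le g \<in> sets lebesgue"
    unfolding star using star_c(1) by auto
  show "emeasure lebesgue (star_le g) = ennreal (cK TYPE('n)) * (\<integral>\<^sup>+ u. g u \<partial>U_sph)"
  proof (cases "(\<integral>\<^sup>+ u. g u \<partial>U_sph) = top")
    case True
    have "star_lt g \<subseteq> star_le g" by (auto simp: star_lt_def star_le_def)
    then have "emeasure lebesgue (star_lt g) \<le> emeasure lebesgue (star_le g)"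
      by (rule emeasure_mono) (rule meas)
    then show ?thesis
      using emeasure_star_lt(2)[OF g] True cK_pos[where 'n='n]
      by (simp add: ennreal_mult_top top_unique)
  next
    case False
    have "decseq c" unfolding c_def
      by (intro decseq_SucI ennreal_leI) (simp add: field_simps)
    have "decseq (\<lambda>n. star_lt (\<lambda>u. c n * g u))"
    proof (rule decseq_SucI, rule subsetI)
      fix n y assume "y \<in> star_lt (\<lambda>u. c (Suc n) * g u)"
      moreover have "c (Suc n) * g (sgn y) \<le> c n * g (sgn y)"
        using decseqD[OF \<open>decseq c\<close>, of n "Suc n"] by (simp add: mult_right_mono)
      ultimately show "y \<in> star_lt (\<lambda>u. c n * g u)"
        unfolding star_lt_def by (auto intro: order_less_le_trans)
    qed
    then have "(\<lambda>n. emeasure lebesgue (star_lt (\<lambda>u. c n * g u))) \<longlonglongrightarrow> emeasure lebesgue (star_le g)"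
      unfolding star using star_c False
      by (intro Lim_emeasure_decseq) (auto simp: ennreal_mult_eq_top_iff c_def)
    moreover have "(\<lambda>n. emeasure lebesgue (star_lt (\<lambda>u. c n * g u)))
        \<longlonglongrightarrow> ennreal (cK TYPE('n)) * (ennreal 1 * (\<integral>\<^sup>+ u. g u \<partial>U_sph))"
      unfolding star_c(2) unfolding c_def
      by (intro tendsto_mult_ennreal tendsto_const tendsto_ennrealI LIMSEQ_inverse_real_of_nat_add)
         (use False in auto)
    ultimately show ?thesis using LIMSEQ_unique by fastforce
  qed
qed

lemma emeasure_lebesgue_squeeze:
  assumes "A \<subseteq> E" "E \<subseteq> B" "A \<in> sets lebesgue" "B \<in> sets lebesgue"
    and "emeasure lebesgue B = emeasure lebesgue A" "emeasure lebesgue A \<noteq> top"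
  shows "emeasure lebesgue E = emeasure lebesgue A"
proof -
  have "emeasure lebesgue (B - A) = 0"
    using assms by (subst emeasure_Diff) auto
  then have "B - A \<in> null_sets lebesgue" using assms by auto
  moreover have "E - A \<subseteq> B - A" using assms by auto
  ultimately have "E - A \<in> null_sets lebesgue"
    using null_sets_completion_subset by blast
  moreover have "E = A \<union> (E - A)" using assms by auto
  ultimately show ?thesis using assms by (metis emeasure_Un_null_set)
qed

section \<open>The reflected dominated region\<close>

text \<open>\<open>radial_pow r S u\<close> is the \<open>K\<close>-th power of the supremum of all \<open>t\<close> for which \<open>r\<one> - t u\<close>
  dominates a point of \<open>S\<close>.\<close>

definition radial_pow :: "real \<Rightarrow> (real^'n::finite) set \<Rightarrow> real^'n \<Rightarrow> ennreal" where
  "radial_pow r S u = (SUP s\<in>S. INF k. ratio r (s$k) (u$k) ^ CARD('n))"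

text \<open>On the boundary of the orthant \<open>radial_pow\<close> need not be Borel measurable; replacing it by
  \<open>0\<close> there changes it only on a \<open>U_sph\<close>-null set.\<close>

definition radial_pow_pos :: "real \<Rightarrow> (real^'n::finite) set \<Rightarrow> real^'n \<Rightarrow> ennreal" where
  "radial_pow_pos r S u = (if \<forall>k. 0 < u$k then radial_pow r S u else 0)"

definition reflected_dominated :: "real \<Rightarrow> (real^'n::finite) set \<Rightarrow> (real^'n) set" where
  "reflected_dominated r S = {y. (\<forall>i. 0 \<le> y$i \<and> y$i \<le> r) \<and> (\<exists>s\<in>S. \<forall>i. s$i \<le> r - y$i)}"

lemma HV_eq_emeasure_reflected_dominated:
  "HV r S = emeasure lebesgue (reflected_dominated r (S::(real^'n::finite) set))"
proof -
  let ?D = "{x :: real^'n. (\<forall>i. 0 \<le> x$i \<and> x$i \<le> r) \<and> (\<exists>s\<in>S. \<forall>i. s$i \<le> x$i)}"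
  have "(\<lambda>x. (-1) *\<^sub>R x + vec r) ` ?D = reflected_dominated r S"
  proof (intro equalityI subsetI)
    fix y assume "y \<in> (\<lambda>x. (-1) *\<^sub>R x + vec r) ` ?D"
    then obtain x where "x \<in> ?D" "y = (-1) *\<^sub>R x + vec r" by blast
    then show "y \<in> reflected_dominated r S" by (auto simp: reflected_dominated_def)
  next
    fix y assume "y \<in> reflected_dominated r S"
    then have "vec r - y \<in> ?D" by (auto simp: reflected_dominated_def)
    moreover have "y = (-1) *\<^sub>R (vec r - y) + vec r" by simp
    ultimately show "y \<in> (\<lambda>x. (-1) *\<^sub>R x + vec r) ` ?D" by blast
  qed
  then show ?thesis
    unfolding HV_def using emeasure_lebesgue_affine[of "-1" "vec r" ?D] by simp
qed

lemma component_eq_norm_mult_sgn: "y$k = norm y * sgn y $ k" for y :: "real^'n::finite"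
  by (cases "y = 0") (auto simp: sgn_div_norm)

lemma closed_coordinate_hyperplanes: "closed {y::real^'n::finite. \<exists>k. y$k = 0}"
proof -
  have "{y::real^'n. \<exists>k. y$k = 0} = (\<Union>k. {y. y$k = 0})" by auto
  moreover have "closed {y::real^'n. y$k = 0}" for k
    by (rule closed_Collect_eq) (auto intro!: continuous_intros)
  ultimately show ?thesis by (simp add: closed_Union)
qed

lemma null_sets_coordinate_hyperplanes: "{y::real^'n::finite. \<exists>k. y$k = 0} \<in> null_sets lebesgue"
proof -
  have "{y::real^'n. \<exists>k. y$k = 0} = (\<Union>k. {y. y$k = 0})" by auto
  moreover have "{y::real^'n. y$k = 0} \<in> null_sets lebesgue" for k
    using negligible_standard_hyperplane_cart negligible_iff_null_sets by blast
  ultimately show ?thesis by (auto intro: null_sets_UN')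
qed

lemma ratio_power_eq:
  assumes "0 < uk" "sk \<le> r"
  shows "ratio r sk uk ^ n = ennreal (((r - sk) / uk) ^ n)"
  using assms by (simp add: ratio_def ennreal_power)

lemma ennreal_power_le_ratio_power_iff:
  assumes "0 \<le> t" "0 < uk" "sk \<le> r" "0 < n"
  shows "ennreal t ^ n \<le> ratio r sk uk ^ n \<longleftrightarrow> t * uk \<le> r - sk"
proof -
  have q: "0 \<le> (r - sk) / uk" using assms by simp
  have "ennreal t ^ n \<le> ratio r sk uk ^ n \<longleftrightarrow> ennreal (t ^ n) \<le> ennreal (((r - sk) / uk) ^ n)"
    using assms by (simp only: ratio_power_eq ennreal_power)
  also have "\<dots> \<longleftrightarrow> t ^ n \<le> ((r - sk) / uk) ^ n"
    using q by (intro ennreal_le_iff) simp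
  also have "\<dots> \<longleftrightarrow> t \<le> (r - sk) / uk"
    using q assms by (intro power_mono_iff) auto
  also have "\<dots> \<longleftrightarrow> t * uk \<le> r - sk"
    using assms(2) by (rule pos_le_divide_eq)
  finally show ?thesis .
qed

lemma ennreal_power_less_ratio_power_iff:
  assumes "0 \<le> t" "0 < uk" "sk \<le> r" "0 < n"
  shows "ennreal t ^ n < ratio r sk uk ^ n \<longleftrightarrow> t * uk < r - sk"
proof -
  have q: "0 \<le> (r - sk) / uk" using assms by simp
  have "ennreal t ^ n < ratio r sk uk ^ n \<longleftrightarrow> ennreal (t ^ n) < ennreal (((r - sk) / uk) ^ n)"
    using assms by (simp only: ratio_power_eq ennreal_power)
  also have "\<dots> \<longleftrightarrow> t ^ n < ((r - sk) / uk) ^ n"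
    using assms by (intro ennreal_less_iff) simp
  also have "\<dots> \<longleftrightarrow> t < (r - sk) / uk"
    using power_mono_iff[OF q assms(1,4)] by (metis not_le)
  also have "\<dots> \<longleftrightarrow> t * uk < r - sk"
    using assms(2) by (rule pos_less_divide_eq)
  finally show ?thesis .
qed

lemma less_INF_finite_iff:
  fixes f :: "'k::finite \<Rightarrow> 'a::complete_linorder"
  shows "a < (INF k. f k) \<longleftrightarrow> (\<forall>k. a < f k)"
  using finite_less_Inf_iff[of "range f" a] by auto

lemma borel_measurable_SUP_INF_continuous_on:
  fixes f :: "'i \<Rightarrow> 'k::finite \<Rightarrow> 'a::topological_space \<Rightarrow> ennreal"
  assumes "open P" and f: "\<And>i k. i \<in> I \<Longrightarrow> continuous_on P (f i k)"
  shows "(\<lambda>x. if x \<in> P then SUP i\<in>I. INF k. f i k x else 0) \<in> borel_measurable borel"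
proof (rule borel_measurableI_greater)
  fix a :: ennreal
  have "{x \<in> space borel. a < (if x \<in> P then SUP i\<in>I. INF k. f i k x else 0)}
      = (\<Union>i\<in>I. \<Inter>k. f i k -` {a<..} \<inter> P)"
    by (auto simp: less_SUP_iff less_INF_finite_iff)
  moreover have "open (f i k -` {a<..} \<inter> P)" if "i \<in> I" for i k
    using continuous_on_open_vimage[OF \<open>open P\<close>] f[OF that] open_greaterThan by blast
  then have "open (\<Union>i\<in>I. \<Inter>k. f i k -` {a<..} \<inter> P)"
    by (intro open_UN ballI open_INT) auto
  ultimately show "{x \<in> space borel. a < (if x \<in> P then SUP i\<in>I. INF k. f i k x else 0)} \<in> sets borel"
    by (simp add: borel_open)
qed

lemma radial_pow_pos_borel:
  assumes S: "S \<subseteq> {x. \<forall>i. 0 \<le> x$i \<and> x$i \<le> r}"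
  shows "radial_pow_pos r (S::(real^'n::finite) set) \<in> borel_measurable borel"
proof -
  define P where "P = {u::real^'n. \<forall>k. 0 < u$k}"
  have "open P"
  proof -
    have "P = (\<Inter>k. {u. u$k > 0})" by (auto simp: P_def)
    then show ?thesis using open_halfspace_component_gt_cart by (auto intro!: open_INT)
  qed
  have P_pos: "0 < u$k" if "u \<in> P" for u k using that by (simp add: P_def)
  have "continuous_on P (\<lambda>u. ratio r (s$k) (u$k) ^ CARD('n))" if "s \<in> S" for s k
  proof (rule continuous_on_eq)
    show "continuous_on P (\<lambda>u. ennreal (((r - s$k) / u$k) ^ CARD('n)))"
      using P_pos by (intro continuous_on_ennreal continuous_intros) (metis less_irrefl)
    show "ennreal (((r - s$k) / u$k) ^ CARD('n)) = ratio r (s$k) (u$k) ^ CARD('n)" if "u \<in> P" for u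
      using P_pos[OF that] \<open>s \<in> S\<close> S by (subst ratio_power_eq) auto
  qed
  then have "(\<lambda>u. if u \<in> P then SUP s\<in>S. INF k. ratio r (s$k) (u$k) ^ CARD('n) else 0)
      \<in> borel_measurable borel"
    by (intro borel_measurable_SUP_INF_continuous_on \<open>open P\<close>)
  moreover have "radial_pow_pos r S
      = (\<lambda>u. if u \<in> P then SUP s\<in>S. INF k. ratio r (s$k) (u$k) ^ CARD('n) else 0)"
    by (simp add: fun_eq_iff radial_pow_pos_def radial_pow_def P_def)
  ultimately show ?thesis by simp
qed

lemma star_lt_radial_pow_pos_subset:
  assumes S: "S \<subseteq> {x. \<forall>i. 0 \<le> x$i \<and> x$i \<le> r}"
  shows "star_lt (radial_pow_pos r S) - {0} \<subseteq> reflected_dominated r (S::(real^'n::finite) set)"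
proof
  fix y assume y: "y \<in> star_lt (radial_pow_pos r S) - {0}"
  define u where "u = sgn y"
  have orthant: "\<forall>i. 0 \<le> y$i"
    and less: "ennreal (norm y) ^ CARD('n) < radial_pow_pos r S u"
    using y by (auto simp: star_lt_def u_def)
  then have pos: "\<forall>k. 0 < u$k"
    by (cases "\<forall>k. 0 < u$k") (auto simp: radial_pow_pos_def)
  with less obtain s where "s \<in> S" and s: "\<forall>k. ennreal (norm y) ^ CARD('n) < ratio r (s$k) (u$k) ^ CARD('n)"
    by (auto simp: radial_pow_pos_def radial_pow_def less_SUP_iff less_INF_finite_iff)
  have less: "y$k < r - s$k" for k
    using s[rule_format, of k] pos \<open>s \<in> S\<close> S
    by (subst (asm) ennreal_power_less_ratio_power_iff)
       (auto simp: u_def component_eq_norm_mult_sgn[of y k])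
  have nonneg: "0 \<le> s$k" for k using \<open>s \<in> S\<close> S by auto
  have "s$k \<le> r - y$k" "y$k \<le> r" for k
    using less[of k] nonneg[of k] by linarith+
  then show "y \<in> reflected_dominated r S"
    using orthant \<open>s \<in> S\<close> unfolding reflected_dominated_def by blast
qed

lemma reflected_dominated_subset_star_le:
  assumes S: "S \<subseteq> {x. \<forall>i. 0 \<le> x$i \<and> x$i \<le> r}"
  shows "reflected_dominated r (S::(real^'n::finite) set)
    \<subseteq> star_le (radial_pow_pos r S) \<union> {y. \<exists>k. y$k = 0}"
proof
  fix y assume y: "y \<in> reflected_dominated r S"
  show "y \<in> star_le (radial_pow_pos r S) \<union> {y. \<exists>k. y$k = 0}"
  proof (cases "\<exists>k. y$k = 0")
    case False
    define u where "u = sgn y"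
    obtain s where "s \<in> S" and s: "\<forall>i. s$i \<le> r - y$i" and orthant: "\<forall>i. 0 \<le> y$i"
      using y by (auto simp: reflected_dominated_def)
    have "y \<noteq> 0" using False by auto
    have pos: "0 < u$k" for k
    proof -
      have "0 < y$k" using orthant False by (metis order_less_le)
      then show ?thesis
        using component_eq_norm_mult_sgn[of y k] by (simp add: u_def zero_less_mult_iff)
    qed
    have "ennreal (norm y) ^ CARD('n) \<le> ratio r (s$k) (u$k) ^ CARD('n)" for k
      using s[rule_format, of k] pos[of k] \<open>s \<in> S\<close> S
      by (subst ennreal_power_le_ratio_power_iff)
         (auto simp: u_def component_eq_norm_mult_sgn[of y k])
    then have "ennreal (norm y) ^ CARD('n) \<le> radial_pow_pos r S u"
      using pos \<open>s \<in> S\<close> unfolding radial_pow_pos_def radial_pow_def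
      by (auto intro: SUP_upper2 simp: le_INF_iff)
    then show ?thesis using orthant by (simp add: star_le_def u_def)
  qed simp
qed

lemma AE_radial_pow_pos_eq_radial_pow:
  "AE u in (U_sph::(real^'n::finite) measure). radial_pow_pos r S u = radial_pow r S u"
proof (rule AE_I')
  let ?N = "sphere_pos \<inter> {y::real^'n. \<exists>k. y$k = 0}"
  have N: "?N \<in> sets U_sph"
    using closed_coordinate_hyperplanes sphere_pos_borel by (auto simp: sets_U_sph_iff)
  have "sector 1 ?N \<subseteq> {y. \<exists>k. y$k = 0}"
    by (auto simp: sector_def sgn_div_norm)
  then have "sector 1 ?N \<in> null_sets lebesgue"
    using null_sets_coordinate_hyperplanes null_sets_completion_subset by blast
  then show "?N \<in> null_sets U_sph"
    using emeasure_U_sph[OF N] N null_setsD1 by (fastforce simp: null_sets_def)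
  show "{u \<in> space U_sph. radial_pow_pos r S u \<noteq> radial_pow r S u} \<subseteq> ?N"
    by (auto simp: space_U_sph radial_pow_pos_def sphere_pos_def order_less_le)
qed

lemma emeasure_reflected_dominated:
  assumes S: "S \<subseteq> {x. \<forall>i. 0 \<le> x$i \<and> x$i \<le> r}"
  shows "emeasure lebesgue (reflected_dominated r (S::(real^'n::finite) set))
    = ennreal (cK TYPE('n)) * (\<integral>\<^sup>+ u. radial_pow_pos r S u \<partial>U_sph)"
proof -
  let ?G = "radial_pow_pos r S" and ?Z = "{y::real^'n. \<exists>k. y$k = 0}"
  have G: "?G \<in> borel_measurable U_sph"
    using radial_pow_pos_borel[OF S] by (rule borel_measurable_U_sph)
  have zero: "{0::real^'n} \<in> null_sets lebesgue"
    using negligible_sing by (simp add: negligible_iff_null_sets)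
  note star_lt = emeasure_star_lt[OF G] and star_le = emeasure_star_le[OF G]
  have lt: "star_lt ?G - {0} \<in> sets lebesgue"
    "emeasure lebesgue (star_lt ?G - {0}) = ennreal (cK TYPE('n)) * (\<integral>\<^sup>+ u. ?G u \<partial>U_sph)"
    using star_lt null_setsD2[OF zero] emeasure_Diff_null_set[OF zero star_lt(1)] by auto
  have le: "star_le ?G \<union> ?Z \<in> sets lebesgue"
    "emeasure lebesgue (star_le ?G \<union> ?Z) = ennreal (cK TYPE('n)) * (\<integral>\<^sup>+ u. ?G u \<partial>U_sph)"
    using star_le null_setsD2[OF null_sets_coordinate_hyperplanes]
      emeasure_Un_null_set[OF star_le(1) null_sets_coordinate_hyperplanes] by auto
  have "star_lt ?G - {0} \<subseteq> cbox 0 (vec r)"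
    using star_lt_radial_pow_pos_subset[OF S]
    by (auto simp: reflected_dominated_def mem_box_cart)
  then have "emeasure lebesgue (star_lt ?G - {0}) \<le> emeasure lebesgue (cbox 0 (vec r :: real^'n))"
    by (rule emeasure_mono) simp
  then have fin: "emeasure lebesgue (star_lt ?G - {0}) \<noteq> top"
    using fmeasurableD2[OF lmeasurable_cbox] by (rule neq_top_trans[rotated])
  have "emeasure lebesgue (reflected_dominated r S) = emeasure lebesgue (star_lt ?G - {0})"
  proof (rule emeasure_lebesgue_squeeze)
    show "star_lt ?G - {0} \<subseteq> reflected_dominated r S"
      using star_lt_radial_pow_pos_subset[OF S] .
    show "reflected_dominated r S \<subseteq> star_le ?G \<union> ?Z"
      using reflected_dominated_subset_star_le[OF S] .
    show "emeasure lebesgue (star_le ?G \<union> ?Z) = emeasure lebesgue (star_lt ?G - {0})"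
      using le(2) lt(2)[symmetric] by (rule trans)
  qed (fact lt(1) le(1) fin)+
  also have "\<dots> = ennreal (cK TYPE('n)) * (\<integral>\<^sup>+ u. ?G u \<partial>U_sph)"
    by (rule lt(2))
  finally show ?thesis .
qed

theorem lemmaD1:
  fixes r :: real and S :: "(real^'n::finite) set"
  assumes "r > 0"
    and "S \<subseteq> {x. \<forall>i. 0 \<le> x$i \<and> x$i \<le> r}"
  shows "HV r S = ennreal (cK TYPE('n)) *
           (\<integral>\<^sup>+ u. (SUP s\<in>S. INF k. (ratio r (s$k) (u$k)) ^ CARD('n)) \<partial>U_sph)"
proof -
  have "HV r S = emeasure lebesgue (reflected_dominated r S)"
    by (rule HV_eq_emeasure_reflected_dominated)
  also have "\<dots> = ennreal (cK TYPE('n)) * (\<integral>\<^sup>+ u. radial_pow_pos r S u \<partial>U_sph)"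
    using assms(2) by (rule emeasure_reflected_dominated)
  also have "(\<integral>\<^sup>+ u. radial_pow_pos r S u \<partial>U_sph) = (\<integral>\<^sup>+ u. radial_pow r S u \<partial>U_sph)"
    by (rule nn_integral_cong_AE[OF AE_radial_pow_pos_eq_radial_pow])
  finally show ?thesis by (simp add: radial_pow_def)
qed

end
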